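(* Let $\mathcal{H}$ be an infinite-dimensional complex separable Hilbert space, $A\in\mathcal{B}(\mathcal{H})$ normal with scalar spectral measure $\mu$, and $\mathcal{G}\subset\mathcal{H}$ finite such that $\{e^{tA}g\}_{g\in\mathcal{G},\,t\in[0,\infty)}$ is a semi-continuous frame for $\mathcal{H}$. Then for every $\varepsilon>0$, $\mu(\{z\in\mathbb{C}:\mathrm{Re}(z)>-\varepsilon\})>0$.
   Context: The scalar spectral measure of a normal $A$ is a nonnegative Borel measure $\mu$ mutually absolutely continuous with $\sum_j\mu_j$, where $\mu_j$ ($j\in\mathbb{N}\cup\{\infty\}$) are the mutually singular measures of the spectral theorem with multiplicity ($A$ unitarily equivalent to $N_{\mu_\infty}^{(\infty)}\oplus N_{\mu_1}\oplus N_{\mu_2}^{(2)}\oplus\cdots$, with $N_\mu$ multiplication by $z$ on $L^2(\mu)$). $e^{tA}:=\sum_{n\ge0}\frac{t^n}{n!}A^n$. For a countable $\mathcal{G}\subset\mathcal{H}$ and an interval $\mathcal{T}\subset[0,\infty)$, $\{e^{tA}g\}_{g\in\mathcal{G},t\in\mathcal{T}}$ is a semi-continuous frame for $\mathcal{H}$ if there are constants $c,C>0$ such that $c\|f\|^2\le\sum_{g\in\mathcal{G}}\int_{\mathcal{T}}|\langle f,e^{tA}g\rangle|^2\,dt\le C\|f\|^2$ for all $f\in\mathcal{H}$. *)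

theory Defs
  imports "HOL-Analysis.Analysis"
begin

class chilbert = banach +
  fixes hscale :: "complex \<Rightarrow> 'a \<Rightarrow> 'a"
    and hinner :: "'a \<Rightarrow> 'a \<Rightarrow> complex"
  assumes hscale_of_real: "hscale (complex_of_real r) x = r *\<^sub>R x"
    and hscale_add_right: "hscale a (x + y) = hscale a x + hscale a y"
    and hscale_add_left: "hscale (a + b) x = hscale a x + hscale b x"
    and hscale_assoc: "hscale a (hscale b x) = hscale (a * b) x"
    and hinner_add_left: "hinner (x + y) z = hinner x z + hinner y z"
    and hinner_hscale_left: "hinner (hscale a x) y = a * hinner x y"
    and hinner_commute: "hinner x y = cnj (hinner y x)"
    and norm_hinner: "norm x = sqrt (Re (hinner x x))"

definition separable_hilbert :: "'a::chilbert itself \<Rightarrow> bool" where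
  "separable_hilbert _ \<longleftrightarrow> (\<exists>D::'a set. countable D \<and> closure D = UNIV)"

definition cspan :: "'a::chilbert set \<Rightarrow> 'a set" where
  "cspan S = {\<Sum>v\<in>T. hscale (c v) v | T c. finite T \<and> T \<subseteq> S}"

definition infinite_dimensional :: "'a::chilbert itself \<Rightarrow> bool" where
  "infinite_dimensional _ \<longleftrightarrow> (\<forall>S::'a set. finite S \<longrightarrow> cspan S \<noteq> UNIV)"

definition bounded_clinear_op :: "('a::chilbert \<Rightarrow> 'a) \<Rightarrow> bool" where
  "bounded_clinear_op A \<longleftrightarrow>
     (\<forall>x y. A (x + y) = A x + A y) \<and> (\<forall>c x. A (hscale c x) = hscale c (A x)) \<and>
     (\<exists>K. \<forall>x. norm (A x) \<le> K * norm x)"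

definition is_adjoint :: "('a::chilbert \<Rightarrow> 'a) \<Rightarrow> ('a \<Rightarrow> 'a) \<Rightarrow> bool" where
  "is_adjoint A B \<longleftrightarrow> (\<forall>x y. hinner (A x) y = hinner x (B y))"

definition normal_op :: "('a::chilbert \<Rightarrow> 'a) \<Rightarrow> bool" where
  "normal_op A \<longleftrightarrow> (\<exists>B. is_adjoint A B \<and> A \<circ> B = B \<circ> A)"

definition expA :: "('a::chilbert \<Rightarrow> 'a) \<Rightarrow> real \<Rightarrow> 'a \<Rightarrow> 'a" where
  "expA A t g = (\<Sum>n. (t ^ n / fact n) *\<^sub>R (A ^^ n) g)"

definition semi_continuous_frame ::
    "('a::chilbert \<Rightarrow> 'a) \<Rightarrow> 'a set \<Rightarrow> real set \<Rightarrow> bool" where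
  "semi_continuous_frame A G T \<longleftrightarrow>
     (\<exists>c C. c > 0 \<and> C > 0 \<and> (\<forall>f.
        ennreal (c * (norm f)\<^sup>2)
          \<le> (\<Sum>g\<in>G. \<integral>\<^sup>+ t\<in>T. ennreal ((cmod (hinner f (expA A t g)))\<^sup>2) \<partial>lborel) \<and>
        (\<Sum>g\<in>G. \<integral>\<^sup>+ t\<in>T. ennreal ((cmod (hinner f (expA A t g)))\<^sup>2) \<partial>lborel)
          \<le> ennreal (C * (norm f)\<^sup>2)))"

text \<open>Multiplicity indices \<open>j \<in> \<nat> \<union> {\<infinity>}\<close>: \<open>None\<close> stands for \<open>\<infinity>\<close>,
  \<open>Some n\<close> (with \<open>n \<ge> 1\<close>) for multiplicity \<open>n\<close>. The \<open>j\<close>-th summand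
  \<open>N_{\<mu>_j}^{(j)}\<close> consists of the copies \<open>k \<in> mult_copies j\<close> of \<open>L\<^sup>2(\<mu>_j)\<close>.\<close>

definition mult_indices :: "nat option set" where
  "mult_indices = insert None (Some ` {1..})"

fun mult_copies :: "nat option \<Rightarrow> nat set" where
  "mult_copies None = UNIV"
| "mult_copies (Some n) = {..<n}"

definition model_index :: "(nat option \<times> nat) set" where
  "model_index = {(j, k). j \<in> mult_indices \<and> k \<in> mult_copies j}"

definition model_norm2 ::
    "(nat option \<Rightarrow> complex measure) \<Rightarrow> (nat option \<Rightarrow> nat \<Rightarrow> complex \<Rightarrow> complex) \<Rightarrow> ennreal" where
  "model_norm2 \<mu>s F =
     (\<integral>\<^sup>+ p. (\<integral>\<^sup>+ z. ennreal ((cmod (F (fst p) (snd p) z))\<^sup>2) \<partial>\<mu>s (fst p)) \<partial>count_space model_index)"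

definition model_measurable ::
    "(nat option \<Rightarrow> complex measure) \<Rightarrow> (nat option \<Rightarrow> nat \<Rightarrow> complex \<Rightarrow> complex) \<Rightarrow> bool" where
  "model_measurable \<mu>s F \<longleftrightarrow>
     (\<forall>(j, k) \<in> model_index. F j k \<in> borel_measurable (\<mu>s j))"

text \<open>\<open>A\<close> is unitarily equivalent, via \<open>U\<close>, to
  \<open>N_{\<mu>_\<infinity>}^{(\<infinity>)} \<oplus> N_{\<mu>_1} \<oplus> N_{\<mu>_2}^{(2)} \<oplus> \<dots>\<close>:
  \<open>U\<close> is linear, isometric and onto the model space (elements of \<open>L\<^sup>2\<close> being
  identified when equal a.e.), and intertwines \<open>A\<close> with multiplication by \<open>z\<close>.\<close>

definition unitarily_equivalent_model ::
    "('a::chilbert \<Rightarrow> 'a) \<Rightarrow> (nat option \<Rightarrow> complex measure) \<Rightarrow> bool" where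
  "unitarily_equivalent_model A \<mu>s \<longleftrightarrow>
     (\<exists>U :: 'a \<Rightarrow> nat option \<Rightarrow> nat \<Rightarrow> complex \<Rightarrow> complex.
        (\<forall>x. model_measurable \<mu>s (U x)) \<and>
        (\<forall>x y. \<forall>(j, k) \<in> model_index.
            AE z in \<mu>s j. U (x + y) j k z = U x j k z + U y j k z) \<and>
        (\<forall>c x. \<forall>(j, k) \<in> model_index.
            AE z in \<mu>s j. U (hscale c x) j k z = c * U x j k z) \<and>
        (\<forall>x. model_norm2 \<mu>s (U x) = ennreal ((norm x)\<^sup>2)) \<and>
        (\<forall>F. model_measurable \<mu>s F \<and> model_norm2 \<mu>s F < \<infinity> \<longrightarrow>
            (\<exists>x. \<forall>(j, k) \<in> model_index. AE z in \<mu>s j. U x j k z = F j k z)) \<and>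
        (\<forall>x. \<forall>(j, k) \<in> model_index.
            AE z in \<mu>s j. U (A x) j k z = z * U x j k z))"

definition mutually_singular :: "complex measure \<Rightarrow> complex measure \<Rightarrow> bool" where
  "mutually_singular \<mu> \<nu> \<longleftrightarrow>
     (\<exists>S \<in> sets borel. emeasure \<mu> S = 0 \<and> emeasure \<nu> (UNIV - S) = 0)"

text \<open>\<open>\<mu>\<close> is a scalar spectral measure of \<open>A\<close>: a nonnegative Borel measure
  mutually absolutely continuous with \<open>\<Sum>_j \<mu>_j\<close>, where the \<open>\<mu>_j\<close> are the
  mutually singular (finite Borel) measures of the spectral theorem with multiplicity.
  A Borel set is \<open>\<Sum>_j \<mu>_j\<close>-null iff it is \<open>\<mu>_j\<close>-null for every \<open>j\<close>.\<close>

definition scalar_spectral_measure ::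
    "('a::chilbert \<Rightarrow> 'a) \<Rightarrow> complex measure \<Rightarrow> bool" where
  "scalar_spectral_measure A \<mu> \<longleftrightarrow>
     sets \<mu> = sets borel \<and>
     (\<exists>\<mu>s. (\<forall>j \<in> mult_indices. finite_measure (\<mu>s j) \<and> sets (\<mu>s j) = sets borel) \<and>
          (\<forall>i \<in> mult_indices. \<forall>j \<in> mult_indices. i \<noteq> j \<longrightarrow> mutually_singular (\<mu>s i) (\<mu>s j)) \<and>
          unitarily_equivalent_model A \<mu>s \<and>
          (\<forall>\<Delta> \<in> sets borel. emeasure \<mu> \<Delta> = 0 \<longleftrightarrow> (\<forall>j \<in> mult_indices. emeasure (\<mu>s j) \<Delta> = 0)))"

end

theory Submission imports Defs begin

text \<open>If \<open>\<mu>\<close> vanished on the half-plane \<open>Re z > -\<epsilon>\<close>, every measure \<open>\<mu>\<^sub>j\<close> of the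
  multiplicity model would be carried by \<open>Re z \<le> -\<epsilon>\<close>, where \<open>|exp (t z)| \<le> exp (-\<epsilon> t)\<close>;
  hence \<open>\<parallel>e\<^bsup>tA\<^esup> g\<parallel>\<^sup>2 \<le> exp (-2\<epsilon> t) \<parallel>g\<parallel>\<^sup>2\<close> and
  \<open>\<Sum>\<^sub>g \<integral>\<^sub>0\<^sup>\<infinity> \<parallel>e\<^bsup>tA\<^esup> g\<parallel>\<^sup>2 dt \<le> \<Sum>\<^sub>g \<parallel>g\<parallel>\<^sup>2 / (2\<epsilon>)\<close>.
  On the other hand, applying the lower frame bound \<open>c\<close> to an orthonormal family
  \<open>e\<^sub>1, \<dots>, e\<^sub>n\<close> and summing, Bessel's inequality gives
  \<open>c n \<le> \<Sum>\<^sub>g \<integral>\<^sub>0\<^sup>\<infinity> \<parallel>e\<^bsup>tA\<^esup> g\<parallel>\<^sup>2 dt\<close>. As the space is infinite-dimensional, \<open>n\<close> is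
  arbitrary.\<close>

lemma hinner_zero_left [simp]: "hinner 0 y = 0"
  using hinner_add_left[of 0 0 y] by simp

lemma hinner_zero_right [simp]: "hinner x 0 = 0"
  using hinner_commute[of x 0] by simp

lemma hinner_add_right: "hinner x (y + z) = hinner x y + hinner x z"
  by (metis complex_cnj_add hinner_add_left hinner_commute)

lemma hinner_minus_left: "hinner (- x) y = - hinner x y"
  using hinner_add_left[of x "-x" y] by (simp add: add_eq_0_iff)

lemma hinner_diff_left: "hinner (x - y) z = hinner x z - hinner y z"
  using hinner_add_left[of x "-y" z] by (simp add: hinner_minus_left)

lemma hinner_hscale_right: "hinner x (hscale a y) = cnj a * hinner x y"
  by (metis complex_cnj_mult hinner_commute hinner_hscale_left)

lemma hinner_scaleR_right: "hinner x (r *\<^sub>R y) = of_real r * hinner x y"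
  by (metis hinner_hscale_right hscale_of_real complex_cnj_complex_of_real)

lemma hinner_sum_left: "hinner (\<Sum>i\<in>I. f i) y = (\<Sum>i\<in>I. hinner (f i) y)"
  by (induction I rule: infinite_finite_induct) (auto simp: hinner_add_left)

lemma hinner_sum_right: "hinner x (\<Sum>i\<in>I. f i) = (\<Sum>i\<in>I. hinner x (f i))"
  by (induction I rule: infinite_finite_induct) (auto simp: hinner_add_right)

lemma hinner_self: "hinner x x = complex_of_real ((norm x)\<^sup>2)"
proof -
  have "Im (hinner x x) = 0"
    using hinner_commute[of x x] by (metis cnj.simps(2) complex.expand minus_complex.simps(2) diff_self neg_equal_zero)
  moreover have "Re (hinner x x) \<ge> 0"
    by (metis norm_ge_zero norm_hinner real_sqrt_ge_0_iff)
  ultimately show ?thesis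
    using norm_hinner[of x] by (simp add: complex_eq_iff)
qed

lemma hinner_hscale_self:
  "hinner (hscale a y) (hscale a y) = complex_of_real ((cmod a)\<^sup>2 * (norm y)\<^sup>2)"
proof -
  have "hinner (hscale a y) (hscale a y) = (a * cnj a) * hinner y y"
    by (simp add: hinner_hscale_left hinner_hscale_right)
  also have "a * cnj a = complex_of_real ((cmod a)\<^sup>2)"
    by (metis complex_norm_square of_real_power)
  finally show ?thesis by (simp add: hinner_self)
qed

lemma hinner_normalize_self:
  "y \<noteq> 0 \<Longrightarrow> hinner (hscale (1 / norm y) y) (hscale (1 / norm y) y) = 1"
  by (simp add: hinner_hscale_self norm_divide power_divide)

subsection \<open>Orthonormal families\<close>

definition orthonormal :: "(nat \<Rightarrow> 'a::chilbert) \<Rightarrow> nat \<Rightarrow> bool" where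
  "orthonormal e N \<longleftrightarrow> (\<forall>i<N. \<forall>j<N. hinner (e i) (e j) = (if i = j then 1 else 0))"

lemma orthonormal_norm: "orthonormal e N \<Longrightarrow> i < N \<Longrightarrow> norm (e i) = 1"
  unfolding orthonormal_def using norm_hinner[of "e i"] by auto

lemma hinner_orthonormal_sum:
  assumes "orthonormal e N" "j < N"
  shows "hinner (\<Sum>i<N. hscale (a i) (e i)) (e j) = a j"
proof -
  have "hinner (\<Sum>i<N. hscale (a i) (e i)) (e j) = (\<Sum>i<N. a i * hinner (e i) (e j))"
    by (simp add: hinner_sum_left hinner_hscale_left)
  also have "\<dots> = (\<Sum>i<N. if i = j then a i else 0)"
    using assms unfolding orthonormal_def by (intro sum.cong) auto
  finally show ?thesis using assms(2) by simp
qed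

lemma hinner_orthogonal_residual:
  assumes "orthonormal e N" "j < N"
  shows "hinner (x - (\<Sum>i<N. hscale (hinner x (e i)) (e i))) (e j) = 0"
  using hinner_orthonormal_sum[OF assms] by (simp add: hinner_diff_left)

lemma bessel_inequality:
  assumes "orthonormal e N"
  shows "(\<Sum>k<N. (cmod (hinner x (e k)))\<^sup>2) \<le> (norm x)\<^sup>2"
proof -
  define c where "c k = hinner x (e k)" for k
  define y where "y = (\<Sum>k<N. hscale (c k) (e k))"
  define w where "w = x - y"
  have wy: "hinner w y = 0"
    using hinner_orthogonal_residual[OF assms]
    unfolding w_def y_def c_def by (simp add: hinner_sum_right hinner_hscale_right)
  have yy: "hinner y y = (\<Sum>k<N. complex_of_real ((cmod (c k))\<^sup>2))"
  proof -
    have "hinner y y = (\<Sum>k<N. cnj (c k) * c k)"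
      using hinner_orthonormal_sum[OF assms]
      by (subst (2) y_def) (simp add: hinner_sum_right hinner_hscale_right y_def)
    also have "\<dots> = (\<Sum>k<N. complex_of_real ((cmod (c k))\<^sup>2))"
      by (intro sum.cong refl) (metis complex_norm_square mult.commute of_real_power)
    finally show ?thesis .
  qed
  have "x = w + y" by (simp add: w_def)
  then have "hinner x x = hinner w w + hinner w y + hinner y w + hinner y y"
    by (simp add: hinner_add_left hinner_add_right)
  also have "hinner y w = 0"
    using wy hinner_commute[of y w] by simp
  finally have "hinner x x = hinner w w + (\<Sum>k<N. complex_of_real ((cmod (c k))\<^sup>2))"
    by (simp add: wy yy)
  then have "(norm x)\<^sup>2 = (norm w)\<^sup>2 + (\<Sum>k<N. (cmod (c k))\<^sup>2)"
    by (metis hinner_self of_real_add of_real_eq_iff of_real_sum)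
  thus ?thesis unfolding c_def by (smt (verit) zero_le_power2)
qed

lemma cauchy_schwarz: "cmod (hinner x y) \<le> norm x * norm y"
proof (cases "y = 0")
  case False
  define e where "e = (\<lambda>_::nat. hscale (1 / norm y) y)"
  have "orthonormal e 1"
    using hinner_normalize_self[OF False] unfolding orthonormal_def e_def by auto
  from bessel_inequality[OF this, of x] have "cmod (hinner x (e 0)) \<le> norm x"
    using power2_le_imp_le by force
  moreover have "cmod (hinner x (e 0)) = cmod (hinner x y) / norm y"
    by (simp add: e_def hinner_hscale_right norm_mult norm_divide)
  ultimately show ?thesis using False by (simp add: divide_le_eq mult.commute)
qed simp

lemma bounded_linear_hinner_right: "bounded_linear (\<lambda>x. hinner f x)"
proof (rule bounded_linear_intro[of _ "norm f"])
  show "hinner f (r *\<^sub>R x) = r *\<^sub>R hinner f x" for r x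
    by (simp add: hinner_scaleR_right scaleR_conv_of_real)
  show "norm (hinner f x) \<le> norm x * norm f" for x
    using cauchy_schwarz[of f x] by (simp add: mult.commute)
qed (rule hinner_add_right)

lemma orthonormal_extend:
  fixes e :: "nat \<Rightarrow> 'a::chilbert"
  assumes e: "orthonormal e N" and v: "v \<notin> cspan (e ` {..<N})"
  obtains e' :: "nat \<Rightarrow> 'a" where "orthonormal e' (Suc N)"
proof -
  define w where "w = v - (\<Sum>i<N. hscale (hinner v (e i)) (e i))"
  have "w \<noteq> 0"
  proof
    assume "w = 0"
    have "inj_on e {..<N}"
      using e unfolding orthonormal_def by (intro inj_onI) (metis lessThan_iff zero_neq_one)
    then have "(\<Sum>i<N. hscale (hinner v (e i)) (e i)) = (\<Sum>u\<in>e ` {..<N}. hscale (hinner v u) u)"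
      by (simp add: sum.reindex)
    with \<open>w = 0\<close> have "v \<in> cspan (e ` {..<N})"
      unfolding w_def cspan_def by auto
    with v show False by simp
  qed
  define e' where "e' = e(N := hscale (1 / norm w) w)"
  have new: "hinner (e' N) (e' j) = 0" if "j < N" for j
    using hinner_orthogonal_residual[OF e that, of v] that
    by (simp add: e'_def w_def hinner_hscale_left)
  have "orthonormal e' (Suc N)"
    unfolding orthonormal_def
  proof (intro allI impI)
    fix i j assume "i < Suc N" "j < Suc N"
    then consider "i < N" "j < N" | "i = N" "j < N" | "i < N" "j = N" | "i = N" "j = N"
      by linarith
    then show "hinner (e' i) (e' j) = (if i = j then 1 else 0)"
    proof cases
      case 1 then show ?thesis using e unfolding orthonormal_def e'_def by auto
    next
      case 3 then show ?thesis using new[of i] hinner_commute[of "e' i" "e' N"] by simp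
    qed (use new hinner_normalize_self[OF \<open>w \<noteq> 0\<close>] in \<open>auto simp: e'_def\<close>)
  qed
  then show thesis by (rule that)
qed

lemma orthonormal_exists:
  assumes "infinite_dimensional TYPE('a::chilbert)"
  shows "\<exists>e::nat \<Rightarrow> 'a. orthonormal e N"
proof (induction N)
  case 0 show ?case by (simp add: orthonormal_def)
next
  case (Suc N)
  then obtain e :: "nat \<Rightarrow> 'a" where e: "orthonormal e N" by blast
  have "cspan (e ` {..<N}) \<noteq> UNIV"
    using assms unfolding infinite_dimensional_def by blast
  then obtain v where "v \<notin> cspan (e ` {..<N})" by blast
  with e show ?case by (metis orthonormal_extend)
qed

lemma exp_partial_sums_tendsto:
  "(\<lambda>n. \<Sum>m<n. complex_of_real (t ^ m / fact m) * z ^ m) \<longlonglongrightarrow> exp (complex_of_real t * z)"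
proof -
  have "(\<lambda>m. (complex_of_real t * z) ^ m /\<^sub>R fact m) sums exp (complex_of_real t * z)"
    by (rule exp_converges)
  moreover have "(complex_of_real t * z) ^ m /\<^sub>R fact m = complex_of_real (t ^ m / fact m) * z ^ m" for m
    by (simp add: scaleR_conv_of_real power_mult_distrib field_simps)
  ultimately show ?thesis by (simp add: sums_def)
qed

lemma AE_eq_if_L2_tendsto_and_AE_tendsto:
  fixes F :: "'b \<Rightarrow> 'c::{real_normed_vector, second_countable_topology}"
  assumes [measurable]: "F \<in> borel_measurable M" "\<And>n. G n \<in> borel_measurable M"
    and L2: "(\<lambda>n. \<integral>\<^sup>+ z. ennreal ((norm (F z - G n z))\<^sup>2) \<partial>M) \<longlonglongrightarrow> 0"
    and pointwise: "AE z in M. (\<lambda>n. G n z) \<longlonglongrightarrow> H z"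
  shows "AE z in M. F z = H z"
proof -
  have "(\<integral>\<^sup>+ z. liminf (\<lambda>n. ennreal ((norm (F z - G n z))\<^sup>2)) \<partial>M)
      \<le> liminf (\<lambda>n. \<integral>\<^sup>+ z. ennreal ((norm (F z - G n z))\<^sup>2) \<partial>M)"
    by (rule nn_integral_liminf) measurable
  also have "\<dots> = 0"
    using L2 by (simp add: lim_imp_Liminf)
  finally have "AE z in M. liminf (\<lambda>n. ennreal ((norm (F z - G n z))\<^sup>2)) = 0"
    by (subst nn_integral_0_iff_AE[symmetric]) auto
  then show ?thesis
    using pointwise
  proof eventually_elim
    case (elim z)
    have "(\<lambda>n. ennreal ((norm (F z - G n z))\<^sup>2)) \<longlonglongrightarrow> ennreal ((norm (F z - H z))\<^sup>2)"
      using elim(2) by (intro tendsto_ennrealI tendsto_intros)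
    with elim(1) show "F z = H z"
      by (simp add: lim_imp_Liminf)
  qed
qed

lemma nn_integral_exp_decay:
  assumes "a > 0" "b \<ge> 0"
  shows "(\<integral>\<^sup>+ t\<in>{0..}. ennreal (exp (-a * t) * b) \<partial>lborel) = ennreal (b / a)"
proof -
  have "(\<integral>\<^sup>+ t\<in>{0..}. ennreal (exp (-a * t) * b) \<partial>lborel)
      = (\<integral>\<^sup>+ t. ennreal (indicator {0..} t * (exp (-a * t) * b)) \<partial>lborel)"
    by (intro nn_integral_cong) (auto simp: indicator_def)
  also have "\<dots> = ennreal (b / a)"
  proof (rule nn_integral_has_integral_lborel)
    have "((\<lambda>x. exp (-a * x) * b) has_integral exp (-a * 0) / a * b) {0..}"
      using has_integral_exp_minus_to_infinity[OF assms(1), of 0] by (rule has_integral_mult_left)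
    then have "((\<lambda>x. if x \<in> {0..} then exp (-a * x) * b else 0) has_integral b / a) UNIV"
      by (subst has_integral_restrict_UNIV) simp
    then show "((\<lambda>t. indicator {0..} t * (exp (-a * t) * b)) has_integral b / a) UNIV"
      by (rule has_integral_eq[rotated]) (auto simp: indicator_def)
  qed (use assms in \<open>auto simp: indicator_def\<close>)
  finally show ?thesis .
qed

subsection \<open>The exponential of a bounded operator\<close>

definition expA_partial :: "('a::chilbert \<Rightarrow> 'a) \<Rightarrow> real \<Rightarrow> 'a \<Rightarrow> nat \<Rightarrow> 'a" where
  "expA_partial A t g n = (\<Sum>m<n. (t ^ m / fact m) *\<^sub>R (A ^^ m) g)"

locale bounded_operator =
  fixes A :: "'a::chilbert \<Rightarrow> 'a"
  assumes bounded_clinear: "bounded_clinear_op A"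
begin

lemma norm_bound: obtains K where "K \<ge> 0" "\<And>x. norm (A x) \<le> K * norm x"
proof -
  obtain K where K: "\<And>x. norm (A x) \<le> K * norm x"
    using bounded_clinear unfolding bounded_clinear_op_def by blast
  have "norm (A x) \<le> max K 0 * norm x" for x
    using K[of x] by (smt (verit) mult_right_mono norm_ge_zero)
  then show ?thesis by (intro that[of "max K 0"]) auto
qed

lemma norm_power_bound:
  assumes "K \<ge> 0" "\<And>x. norm (A x) \<le> K * norm x"
  shows "norm ((A ^^ n) x) \<le> K ^ n * norm x"
proof (induction n)
  case (Suc n)
  have "norm ((A ^^ Suc n) x) \<le> K * norm ((A ^^ n) x)" using assms(2) by simp
  also have "\<dots> \<le> K * (K ^ n * norm x)" using Suc assms(1) by (rule mult_left_mono)
  finally show ?case by simp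
qed simp

lemma summable_expA: "summable (\<lambda>n. (t ^ n / fact n) *\<^sub>R (A ^^ n) g)"
proof -
  obtain K where K: "K \<ge> 0" "\<And>x. norm (A x) \<le> K * norm x" using norm_bound by blast
  have bound: "norm (norm ((t ^ n / fact n) *\<^sub>R (A ^^ n) g)) \<le> (\<bar>t\<bar> * K) ^ n / fact n * norm g" for n
  proof -
    have "norm ((t ^ n / fact n) *\<^sub>R (A ^^ n) g) = \<bar>t\<bar> ^ n / fact n * norm ((A ^^ n) g)"
      by (simp add: power_abs)
    also have "\<dots> \<le> \<bar>t\<bar> ^ n / fact n * (K ^ n * norm g)"
      by (intro mult_left_mono norm_power_bound K) auto
    finally show ?thesis by (simp add: power_mult_distrib)
  qed
  have "summable (\<lambda>n. (\<bar>t\<bar> * K) ^ n / fact n * norm g)"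
    by (intro summable_mult2) (simp add: summable_exp divide_inverse mult.commute)
  then have "summable (\<lambda>n. norm ((t ^ n / fact n) *\<^sub>R (A ^^ n) g))"
    by (rule summable_comparison_test[rotated]) (use bound in blast)
  then show ?thesis by (rule summable_norm_cancel)
qed

lemma expA_partial_tendsto: "expA_partial A t g \<longlonglongrightarrow> expA A t g"
  unfolding expA_partial_def expA_def by (rule summable_LIMSEQ[OF summable_expA])

lemma borel_measurable_hinner_expA:
  "(\<lambda>t. hinner f (expA A t g)) \<in> borel_measurable lborel"
proof (rule borel_measurable_LIMSEQ_metric)
  show "(\<lambda>n. hinner f (expA_partial A t g n)) \<longlonglongrightarrow> hinner f (expA A t g)" for t
    using bounded_linear.tendsto[OF bounded_linear_hinner_right expA_partial_tendsto] .
  show "(\<lambda>t. hinner f (expA_partial A t g n)) \<in> borel_measurable lborel" for n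
    unfolding expA_partial_def hinner_sum_right hinner_scaleR_right
    by (subst measurable_lborel2) (intro borel_measurable_continuous_onI continuous_intros; simp)
qed

lemma borel_measurable_frame_integrand:
  "(\<lambda>t. ennreal ((cmod (hinner f (expA A t g)))\<^sup>2)) \<in> borel_measurable lborel"
  using borel_measurable_hinner_expA by measurable

end

subsection \<open>The multiplicity model\<close>

locale spectral_model = bounded_operator A for A :: "'a::chilbert \<Rightarrow> 'a" +
  fixes \<mu>s :: "nat option \<Rightarrow> complex measure"
    and U :: "'a \<Rightarrow> nat option \<Rightarrow> nat \<Rightarrow> complex \<Rightarrow> complex"
  assumes measurable_U: "\<And>x. model_measurable \<mu>s (U x)"
    and U_add_AE: "\<And>x y. \<forall>(j, k) \<in> model_index. AE z in \<mu>s j. U (x + y) j k z = U x j k z + U y j k z"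
    and U_hscale_AE: "\<And>c x. \<forall>(j, k) \<in> model_index. AE z in \<mu>s j. U (hscale c x) j k z = c * U x j k z"
    and model_norm2_U: "\<And>x. model_norm2 \<mu>s (U x) = ennreal ((norm x)\<^sup>2)"
    and U_A_AE: "\<And>x. \<forall>(j, k) \<in> model_index. AE z in \<mu>s j. U (A x) j k z = z * U x j k z"
begin

context
  fixes j k assumes jk: "(j, k) \<in> model_index"
begin

lemma borel_measurable_U: "U x j k \<in> borel_measurable (\<mu>s j)"
  using measurable_U[of x] jk unfolding model_measurable_def by auto

lemma U_add: "AE z in \<mu>s j. U (x + y) j k z = U x j k z + U y j k z"
  using U_add_AE[of x y] jk by auto

lemma U_diff: "AE z in \<mu>s j. U (x - y) j k z = U x j k z - U y j k z"
  using U_add[of "x - y" y] by (auto elim!: AE_mp)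

lemma U_zero: "AE z in \<mu>s j. U 0 j k z = 0"
  using U_add[of 0 0] by (auto elim!: AE_mp)

lemma U_scaleR: "AE z in \<mu>s j. U (r *\<^sub>R x) j k z = of_real r * U x j k z"
  using U_hscale_AE[of "of_real r" x] jk by (auto simp: hscale_of_real)

lemma U_funpow: "AE z in \<mu>s j. U ((A ^^ m) g) j k z = z ^ m * U g j k z"
proof (induction m)
  case (Suc m)
  then show ?case
    using U_A_AE[of "(A ^^ m) g"] jk by (auto elim!: AE_mp)
qed simp

lemma U_expA_partial:
  "AE z in \<mu>s j. U (expA_partial A t g n) j k z
     = (\<Sum>m<n. complex_of_real (t ^ m / fact m) * z ^ m) * U g j k z"
proof (induction n)
  case 0 then show ?case using U_zero by (simp add: expA_partial_def)
next
  case (Suc n)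
  have "expA_partial A t g (Suc n) = expA_partial A t g n + (t ^ n / fact n) *\<^sub>R (A ^^ n) g"
    by (simp add: expA_partial_def)
  then show ?case
    using Suc U_add[of "expA_partial A t g n" "(t ^ n / fact n) *\<^sub>R (A ^^ n) g"]
      U_scaleR[of "t ^ n / fact n" "(A ^^ n) g"] U_funpow[of n g]
    by (auto elim!: AE_mp simp: algebra_simps)
qed

lemma nn_integral_U_le: "(\<integral>\<^sup>+ z. ennreal ((cmod (U x j k z))\<^sup>2) \<partial>\<mu>s j) \<le> ennreal ((norm x)\<^sup>2)"
proof -
  have "(\<integral>\<^sup>+ z. ennreal ((cmod (U x j k z))\<^sup>2) \<partial>\<mu>s j) \<le> model_norm2 \<mu>s (U x)"
    unfolding model_norm2_def
    using nn_integral_ge_point[OF jk, of "\<lambda>p. \<integral>\<^sup>+ z. ennreal ((cmod (U x (fst p) (snd p) z))\<^sup>2) \<partial>\<mu>s (fst p)"]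
    by simp
  then show ?thesis by (simp add: model_norm2_U)
qed

lemma U_expA: "AE z in \<mu>s j. U (expA A t g) j k z = exp (complex_of_real t * z) * U g j k z"
proof (rule AE_eq_if_L2_tendsto_and_AE_tendsto)
  let ?G = "\<lambda>n. U (expA_partial A t g n) j k"
  have le: "(\<integral>\<^sup>+ z. ennreal ((cmod (U (expA A t g) j k z - ?G n z))\<^sup>2) \<partial>\<mu>s j)
      \<le> ennreal ((norm (expA A t g - expA_partial A t g n))\<^sup>2)" for n
  proof -
    have "(\<integral>\<^sup>+ z. ennreal ((cmod (U (expA A t g) j k z - ?G n z))\<^sup>2) \<partial>\<mu>s j)
        = (\<integral>\<^sup>+ z. ennreal ((cmod (U (expA A t g - expA_partial A t g n) j k z))\<^sup>2) \<partial>\<mu>s j)"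
      using U_diff[of "expA A t g" "expA_partial A t g n"]
      by (intro nn_integral_cong_AE) (auto elim!: AE_mp)
    then show ?thesis using nn_integral_U_le by simp
  qed
  have "(\<lambda>n. ennreal ((norm (expA A t g - expA_partial A t g n))\<^sup>2))
      \<longlonglongrightarrow> ennreal ((norm (expA A t g - expA A t g))\<^sup>2)"
    by (intro tendsto_ennrealI tendsto_intros expA_partial_tendsto)
  then have bound_tendsto:
    "(\<lambda>n. ennreal ((norm (expA A t g - expA_partial A t g n))\<^sup>2)) \<longlonglongrightarrow> 0"
    by simp
  show "(\<lambda>n. \<integral>\<^sup>+ z. ennreal ((cmod (U (expA A t g) j k z - ?G n z))\<^sup>2) \<partial>\<mu>s j) \<longlonglongrightarrow> 0"
    by (rule tendsto_sandwich[OF _ _ tendsto_const bound_tendsto]) (use le in auto)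
  have "AE z in \<mu>s j. \<forall>n. ?G n z = (\<Sum>m<n. complex_of_real (t ^ m / fact m) * z ^ m) * U g j k z"
    using U_expA_partial by (simp add: AE_all_countable)
  then show "AE z in \<mu>s j. (\<lambda>n. ?G n z) \<longlonglongrightarrow> exp (complex_of_real t * z) * U g j k z"
    by eventually_elim (simp only:, intro tendsto_mult exp_partial_sums_tendsto tendsto_const)
  show "U (expA A t g) j k \<in> borel_measurable (\<mu>s j)" "?G n \<in> borel_measurable (\<mu>s j)" for n
    by (rule borel_measurable_U)+
qed

lemma nn_integral_U_expA_le:
  assumes "AE z in \<mu>s j. Re z \<le> -\<epsilon>" and "t \<ge> 0"
  shows "(\<integral>\<^sup>+ z. ennreal ((cmod (U (expA A t g) j k z))\<^sup>2) \<partial>\<mu>s j)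
    \<le> ennreal (exp (-2 * \<epsilon> * t)) * (\<integral>\<^sup>+ z. ennreal ((cmod (U g j k z))\<^sup>2) \<partial>\<mu>s j)"
proof -
  have "AE z in \<mu>s j. ennreal ((cmod (U (expA A t g) j k z))\<^sup>2)
      \<le> ennreal (exp (-2 * \<epsilon> * t)) * ennreal ((cmod (U g j k z))\<^sup>2)"
    using assms(1) U_expA[of t g]
  proof eventually_elim
    case (elim z)
    have "t * Re z \<le> t * (-\<epsilon>)" using elim(1) assms(2) by (rule mult_left_mono)
    then have "(cmod (exp (complex_of_real t * z)))\<^sup>2 \<le> exp (-2 * \<epsilon> * t)"
      by (simp add: norm_exp_eq_Re power2_eq_square exp_add[symmetric] mult.commute)
    then have "(cmod (U (expA A t g) j k z))\<^sup>2 \<le> exp (-2 * \<epsilon> * t) * (cmod (U g j k z))\<^sup>2"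
      using elim(2) by (simp add: norm_mult power_mult_distrib mult_right_mono)
    then show ?case by (simp add: ennreal_mult[symmetric] ennreal_leI)
  qed
  then have "(\<integral>\<^sup>+ z. ennreal ((cmod (U (expA A t g) j k z))\<^sup>2) \<partial>\<mu>s j)
      \<le> (\<integral>\<^sup>+ z. ennreal (exp (-2 * \<epsilon> * t)) * ennreal ((cmod (U g j k z))\<^sup>2) \<partial>\<mu>s j)"
    by (rule nn_integral_mono_AE)
  also have "\<dots> = ennreal (exp (-2 * \<epsilon> * t)) * (\<integral>\<^sup>+ z. ennreal ((cmod (U g j k z))\<^sup>2) \<partial>\<mu>s j)"
    using borel_measurable_U by (intro nn_integral_cmult) measurable
  finally show ?thesis .
qed

end

lemma norm_expA_decay:
  assumes "\<forall>j\<in>mult_indices. AE z in \<mu>s j. Re z \<le> -\<epsilon>" and "t \<ge> 0"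
  shows "(norm (expA A t g))\<^sup>2 \<le> exp (-2 * \<epsilon> * t) * (norm g)\<^sup>2"
proof -
  have "ennreal ((norm (expA A t g))\<^sup>2) = model_norm2 \<mu>s (U (expA A t g))"
    by (simp add: model_norm2_U)
  also have "\<dots> \<le> (\<integral>\<^sup>+ p. ennreal (exp (-2 * \<epsilon> * t))
        * (\<integral>\<^sup>+ z. ennreal ((cmod (U g (fst p) (snd p) z))\<^sup>2) \<partial>\<mu>s (fst p)) \<partial>count_space model_index)"
    unfolding model_norm2_def
  proof (rule nn_integral_mono)
    fix p assume "p \<in> space (count_space model_index)"
    then have "p \<in> model_index" "fst p \<in> mult_indices"
      by (auto simp: model_index_def)
    then show "(\<integral>\<^sup>+ z. ennreal ((cmod (U (expA A t g) (fst p) (snd p) z))\<^sup>2) \<partial>\<mu>s (fst p))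
      \<le> ennreal (exp (-2 * \<epsilon> * t)) * (\<integral>\<^sup>+ z. ennreal ((cmod (U g (fst p) (snd p) z))\<^sup>2) \<partial>\<mu>s (fst p))"
      using nn_integral_U_expA_le[of "fst p" "snd p"] assms by simp
  qed
  also have "\<dots> = ennreal (exp (-2 * \<epsilon> * t)) * model_norm2 \<mu>s (U g)"
    unfolding model_norm2_def by (rule nn_integral_cmult) simp
  also have "\<dots> = ennreal (exp (-2 * \<epsilon> * t) * (norm g)\<^sup>2)"
    by (simp add: model_norm2_U ennreal_mult)
  finally show ?thesis by (simp add: ennreal_le_iff)
qed

end

lemma norm_expA_decay_if_null_halfplane:
  assumes "bounded_clinear_op A" "scalar_spectral_measure A \<mu>"
    and null: "emeasure \<mu> {z. Re z > -\<epsilon>} = 0" and "t \<ge> 0"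
  shows "(norm (expA A t g))\<^sup>2 \<le> exp (-2 * \<epsilon> * t) * (norm g)\<^sup>2"
proof -
  have halfplane: "{z. Re z > -\<epsilon>} \<in> sets borel"
    by (intro borel_open open_halfspace_Re_gt)
  obtain \<mu>s where \<mu>s: "\<forall>j \<in> mult_indices. finite_measure (\<mu>s j) \<and> sets (\<mu>s j) = sets borel"
    and "unitarily_equivalent_model A \<mu>s"
    and null_iff: "\<forall>\<Delta> \<in> sets borel. emeasure \<mu> \<Delta> = 0 \<longleftrightarrow> (\<forall>j \<in> mult_indices. emeasure (\<mu>s j) \<Delta> = 0)"
    using assms(2) unfolding scalar_spectral_measure_def by blast
  then obtain U where "spectral_model A \<mu>s U"
    using assms(1) unfolding spectral_model_def spectral_model_axioms_def bounded_operator_def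
      unitarily_equivalent_model_def by blast
  moreover have "\<forall>j\<in>mult_indices. AE z in \<mu>s j. Re z \<le> -\<epsilon>"
  proof
    fix j assume "j \<in> mult_indices"
    then have "{z. Re z > -\<epsilon>} \<in> null_sets (\<mu>s j)"
      using null null_iff halfplane \<mu>s by (simp add: null_sets_def)
    then show "AE z in \<mu>s j. Re z \<le> -\<epsilon>"
      by (rule AE_I') auto
  qed
  ultimately show ?thesis
    using spectral_model.norm_expA_decay \<open>t \<ge> 0\<close> by blast
qed

lemma nn_integral_norm_expA_le_if_null_halfplane:
  assumes "bounded_clinear_op A" "scalar_spectral_measure A \<mu>"
    and "emeasure \<mu> {z. Re z > -\<epsilon>} = 0" and "\<epsilon> > 0"
  shows "(\<integral>\<^sup>+ t\<in>{0..}. ennreal ((norm (expA A t g))\<^sup>2) \<partial>lborel) \<le> ennreal ((norm g)\<^sup>2 / (2 * \<epsilon>))"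
proof -
  have "(\<integral>\<^sup>+ t\<in>{0..}. ennreal ((norm (expA A t g))\<^sup>2) \<partial>lborel)
      \<le> (\<integral>\<^sup>+ t\<in>{0..}. ennreal (exp (- (2 * \<epsilon>) * t) * (norm g)\<^sup>2) \<partial>lborel)"
    using norm_expA_decay_if_null_halfplane[OF assms(1-3)]
    by (intro nn_integral_mono) (auto simp: indicator_def intro!: ennreal_leI)
  also have "\<dots> = ennreal ((norm g)\<^sup>2 / (2 * \<epsilon>))"
    using assms(4) by (intro nn_integral_exp_decay) auto
  finally show ?thesis .
qed

lemma frame_lower_bound_le_energy:
  fixes A :: "'a::chilbert \<Rightarrow> 'a" and e :: "nat \<Rightarrow> 'a"
  assumes "bounded_clinear_op A" "T \<in> sets lborel" "c \<ge> 0" "orthonormal e n"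
    and lower: "\<And>f. ennreal (c * (norm f)\<^sup>2)
          \<le> (\<Sum>g\<in>G. \<integral>\<^sup>+ t\<in>T. ennreal ((cmod (hinner f (expA A t g)))\<^sup>2) \<partial>lborel)"
  shows "ennreal (c * real n) \<le> (\<Sum>g\<in>G. \<integral>\<^sup>+ t\<in>T. ennreal ((norm (expA A t g))\<^sup>2) \<partial>lborel)"
proof -
  interpret bounded_operator A by unfold_locales (rule assms(1))
  have "ennreal (c * real n) = (\<Sum>k<n. ennreal (c * (norm (e k))\<^sup>2))"
    using orthonormal_norm[OF assms(4)] assms(3)
    by (simp add: ennreal_of_nat_eq_real_of_nat ennreal_mult mult.commute)
  also have "\<dots> \<le> (\<Sum>k<n. \<Sum>g\<in>G. \<integral>\<^sup>+ t\<in>T. ennreal ((cmod (hinner (e k) (expA A t g)))\<^sup>2) \<partial>lborel)"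
    by (intro sum_mono lower)
  also have "\<dots> = (\<Sum>g\<in>G. \<Sum>k<n. \<integral>\<^sup>+ t\<in>T. ennreal ((cmod (hinner (e k) (expA A t g)))\<^sup>2) \<partial>lborel)"
    by (rule sum.swap)
  also have "\<dots> = (\<Sum>g\<in>G. \<integral>\<^sup>+ t. (\<Sum>k<n. ennreal ((cmod (hinner (e k) (expA A t g)))\<^sup>2)) * indicator T t \<partial>lborel)"
    unfolding sum_distrib_right
    by (intro sum.cong refl nn_integral_sum[symmetric])
      (use assms(2) borel_measurable_frame_integrand in measurable)
  also have "\<dots> \<le> (\<Sum>g\<in>G. \<integral>\<^sup>+ t\<in>T. ennreal ((norm (expA A t g))\<^sup>2) \<partial>lborel)"
  proof (intro sum_mono nn_integral_mono mult_right_mono)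
    fix g t
    have "(\<Sum>k<n. ennreal ((cmod (hinner (e k) (expA A t g)))\<^sup>2))
        = ennreal (\<Sum>k<n. (cmod (hinner (expA A t g) (e k)))\<^sup>2)"
      by (subst sum_ennreal) (auto simp: hinner_commute[of "e _" "expA A t g"])
    also have "\<dots> \<le> ennreal ((norm (expA A t g))\<^sup>2)"
      by (intro ennreal_leI bessel_inequality assms(4))
    finally show "(\<Sum>k<n. ennreal ((cmod (hinner (e k) (expA A t g)))\<^sup>2)) \<le> ennreal ((norm (expA A t g))\<^sup>2)" .
  qed simp
  finally show ?thesis .
qed

theorem mainTheorem15:
  fixes A :: "'a::chilbert \<Rightarrow> 'a"
    and \<mu> :: "complex measure"
    and G :: "'a set"
  assumes "separable_hilbert TYPE('a)"
    and "infinite_dimensional TYPE('a)"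
    and "bounded_clinear_op A"
    and "normal_op A"
    and "scalar_spectral_measure A \<mu>"
    and "finite G"
    and "semi_continuous_frame A G {0..}"
  shows "\<forall>\<epsilon>>0. emeasure \<mu> {z. Re z > - \<epsilon>} > 0"
proof (intro allI impI)
  fix \<epsilon> :: real
  assume "\<epsilon> > 0"
  obtain c where "c > 0" and lower: "\<And>f. ennreal (c * (norm f)\<^sup>2)
      \<le> (\<Sum>g\<in>G. \<integral>\<^sup>+ t\<in>{0..}. ennreal ((cmod (hinner f (expA A t g)))\<^sup>2) \<partial>lborel)"
    using assms(7) unfolding semi_continuous_frame_def by blast
  define B where "B = (\<Sum>g\<in>G. (norm g)\<^sup>2 / (2 * \<epsilon>))"
  have "B \<ge> 0"
    unfolding B_def using \<open>\<epsilon> > 0\<close> by (intro sum_nonneg) auto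
  show "emeasure \<mu> {z. Re z > - \<epsilon>} > 0"
  proof (rule ccontr)
    assume "\<not> emeasure \<mu> {z. Re z > - \<epsilon>} > 0"
    then have null: "emeasure \<mu> {z. Re z > - \<epsilon>} = 0" by simp
    have dimension_bound: "c * real n \<le> B" for n
    proof -
      obtain e :: "nat \<Rightarrow> 'a" where "orthonormal e n"
        using orthonormal_exists[OF assms(2)] by blast
      then have "ennreal (c * real n) \<le> (\<Sum>g\<in>G. \<integral>\<^sup>+ t\<in>{0..}. ennreal ((norm (expA A t g))\<^sup>2) \<partial>lborel)"
        using \<open>c > 0\<close> by (intro frame_lower_bound_le_energy[OF assms(3)] lower) auto
      also have "\<dots> \<le> (\<Sum>g\<in>G. ennreal ((norm g)\<^sup>2 / (2 * \<epsilon>)))"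
        using assms(3,5) null \<open>\<epsilon> > 0\<close>
        by (intro sum_mono nn_integral_norm_expA_le_if_null_halfplane)
      also have "\<dots> = ennreal B"
        unfolding B_def using \<open>\<epsilon> > 0\<close> by (intro sum_ennreal) auto
      finally show ?thesis
        using \<open>B \<ge> 0\<close> by simp
    qed
    obtain n where "B < real n * c"
      using reals_Archimedean3[OF \<open>c > 0\<close>] by blast
    with dimension_bound[of n] show False
      by (simp add: mult.commute)
  qed
qed

end
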